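(* Let $\lambda$ be a dominant integral weight of $\mathfrak{sl}_{r+1}$ and let $b\in\mathcal{B}(\lambda+\rho)$. Let $\psi_{\mathbf i}(b)=(a_{i,j})_{1\le j\le i\le r}$ be the BZL path of $b$ with respect to the long word $\mathbf i=(1,2,1,3,2,1,\dots,r,r-1,\dots,2,1)$, written in triangular form, and let $\mathbf a(b)=(\mathbf a_{i,j})_{1\le i\le j\le r}$ be the tableau data of $b$. Then for all $1\le j\le i\le r$, \[ a_{i,j}=\mathbf a_{i-j+1,\,i}, \] i.e. $a_{i,j}$ equals the number of entries equal to $i+1$ lying in rows $1$ through $i-j+1$ of $b$.
   Context: Fix $r\ge1$ and $\mathfrak g=\mathfrak{sl}_{r+1}$ with index set $I=\{1,\dots,r\}$, simple roots $\alpha_1,\dots,\alpha_r$, fundamental weights $\omega_1,\dots,\omega_r$, positive roots $\Phi^+$, $N=|\Phi^+|=r(r+1)/2$, and $\rho=\sum_i\omega_i$. For a dominant integral weight $\mu=\sum_i m_i\omega_i$, the crystal $\mathcal B(\mu)$ is identified (Kashiwara–Nakashima) with the set of semistandard Young tableaux with entries in $\{1,\dots,r+1\}$ of the shape having $m_i$ columns of height $i$. An entry equal to $k$ is called a $k$-box (of color $k$). A tableau is identified with the tensor product $b_1\otimes\cdots\otimes b_m$ of its entries read column by column from the rightmost column to the leftmost, each column from top to bottom. The Kashiwara operators $\tilde e_i,\tilde f_i$ act by the signature rule: for each factor $b_k$ (in order) write $-$ if $b_k=i+1$, $+$ if $b_k=i$, and nothing otherwise; repeatedly cancel adjacent pairs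 $+-$ (a $+$ immediately followed by a $-$); then $\tilde e_i$ changes the factor corresponding to the rightmost remaining $-$ from $i+1$ to $i$ (and $\tilde e_ib=0$ if no $-$ remains), and $\tilde f_i$ changes the factor corresponding to the leftmost remaining $+$ from $i$ to $i+1$ (and $\tilde f_ib=0$ if no $+$ remains). The weight of a tableau is $\sum_k \epsilon_{c_k}$ restricted to $\mathfrak{sl}_{r+1}$, where $c_k$ runs over its entries and $\epsilon_c$ are the standard weights. Fix the long word $\mathbf i=(i_1,\dots,i_N)=(1,2,1,3,2,1,\dots,r,r-1,\dots,2,1)$ of the longest Weyl group element. The BZL path $\psi_{\mathbf i}(b)=(a_1,\dots,a_N)$ is defined inductively: $a_k$ is the maximal integer such that $\tilde e_{i_k}^{a_k}\tilde e_{i_{k-1}}^{a_{k-1}}\cdots\tilde e_{i_1}^{a_1}b\ne0$. It is written in triangular form $(a_{1,1};a_{2,1},a_{2,2};\dots;a_{r,1},\dots,a_{r,r})$, so $a_{i,j}=a_{i(i-1)/2+j}$ and corresponds to the letter $i_{i(i-1)/2+j}=i-j+1$. For a tableau $b\in\mathcal B(\lambda+\rho)$ and $1\le i\le j\le r$, $\mathbf a_{i,j}$ denotes the number of $(j+1)$-boxes in rows $1$ through $i$ of $b$, and $\mathbf a(b)=(\mathbf a_{1,1},\dots,\mathbf a_{1,r};\mathbf a_{2,2},\dots,\mathbf a_{2,r};\dots;\mathbf a_{r,r})$. *)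

theory Defs
  imports Main
begin

text \<open>A tableau is identified with the word (list of entries) obtained by reading
columns from the rightmost to the leftmost, each column from top to bottom.
The operator e_i acts on such words by the signature rule; None represents 0.\<close>

text \<open>Signature of colour i: list of (position, sign), sign True = plus (entry i),
sign False = minus (entry i+1), in order of positions.\<close>
definition signature :: "nat \<Rightarrow> nat list \<Rightarrow> (nat \<times> bool) list" where
  "signature i w = [(k, w ! k = i). k \<leftarrow> [0..<length w], w ! k = i \<or> w ! k = Suc i]"

fun cancel_step :: "(nat \<times> bool) list \<Rightarrow> (nat \<times> bool) list option" where
  "cancel_step ((p, True) # (q, False) # xs) = Some xs"
| "cancel_step (x # xs) = map_option (Cons x) (cancel_step xs)"
| "cancel_step [] = None"

definition cancel_once :: "(nat \<times> bool) list \<Rightarrow> (nat \<times> bool) list" where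
  "cancel_once s = (case cancel_step s of None \<Rightarrow> s | Some s' \<Rightarrow> s')"

text \<open>Repeated cancellation; length s rounds suffice since each round removes two signs.\<close>
definition reduced_signature :: "nat \<Rightarrow> nat list \<Rightarrow> (nat \<times> bool) list" where
  "reduced_signature i w = (cancel_once ^^ length (signature i w)) (signature i w)"

definition kashiwara_e :: "nat \<Rightarrow> nat list \<Rightarrow> nat list option" where
  "kashiwara_e i w =
     (let minus = [p. (p, s) \<leftarrow> reduced_signature i w, \<not> s]
      in if minus = [] then None else Some (w[last minus := i]))"

fun kashiwara_e_iter :: "nat \<Rightarrow> nat \<Rightarrow> nat list \<Rightarrow> nat list option" where
  "kashiwara_e_iter i 0 w = Some w"
| "kashiwara_e_iter i (Suc n) w = Option.bind (kashiwara_e_iter i n w) (kashiwara_e i)"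

fun bzl_path :: "nat list \<Rightarrow> nat list \<Rightarrow> nat list" where
  "bzl_path [] w = []"
| "bzl_path (i # is) w =
     (let a = (GREATEST n. kashiwara_e_iter i n w \<noteq> None)
      in a # bzl_path is (the (kashiwara_e_iter i a w)))"

definition long_word :: "nat \<Rightarrow> nat list" where
  "long_word r = concat [rev [1..<Suc k]. k \<leftarrow> [1..<Suc r]]"

text \<open>A tableau is a list of rows (row 1 first), each a list of entries.
The shape of B(lambda + rho) has lambda_i + 1 columns of height i for i = 1..r,
so row k (1-based) has length sum_{i=k}^r (lambda_i + 1).\<close>
definition ssyt_lambda_rho :: "nat \<Rightarrow> (nat \<Rightarrow> nat) \<Rightarrow> nat list list \<Rightarrow> bool" where
  "ssyt_lambda_rho r lam T \<longleftrightarrow>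
     length T = r
   \<and> (\<forall>k<r. length (T ! k) = (\<Sum>i\<in>{Suc k..r}. lam i + 1))
   \<and> (\<forall>k<r. sorted (T ! k))
   \<and> (\<forall>k. Suc k < r \<longrightarrow> (\<forall>c < length (T ! Suc k). T ! k ! c < T ! Suc k ! c))
   \<and> (\<forall>k<r. \<forall>x\<in>set (T ! k). 1 \<le> x \<and> x \<le> Suc r)"

definition reading_word :: "nat list list \<Rightarrow> nat list" where
  "reading_word T = concat
     [[T ! k ! c. k \<leftarrow> [0..<length T], c < length (T ! k)]. c \<leftarrow> rev [0..<length (T ! 0)]]"

definition tableau_data :: "nat list list \<Rightarrow> nat \<Rightarrow> nat \<Rightarrow> nat" where
  "tableau_data T i j = (\<Sum>k<i. count_list (T ! k) (Suc j))"

end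

theory Submission
  imports Defs
begin

text \<open>
  Write b for the tableau and, for a bound L and a threshold u, let the
  stage word W(L, u) be the reading word of b in which every entry smaller than L
  sitting in row k (rows counted from 1) has been lowered to k, its smallest possible
  value, and every entry equal to L sitting in row k has been lowered to max(k, u).  Then W(2, 2) is the reading
  word of b itself, and W(L, 1) = W(L+1, L+1).  The heart of the proof (stage_step) is:
  for t \<le> \<beta>, applying e_t as often as possible to W(\<beta>+1, t+1) succeeds exactly
  a_{t,\<beta>} times (the number of (\<beta>+1)-boxes in rows 1..t) and produces W(\<beta>+1, t).
  Hence the block (\<beta>, \<beta>-1, ..., 1) of the long word reads off the tableau data
  a_{\<beta>,\<beta>}, ..., a_{1,\<beta>} and carries W(\<beta>+1, \<beta>+1) to W(\<beta>+2, \<beta>+2); iterating over \<beta>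
  gives the whole BZL path.
\<close>

section \<open>The signature rule for structured signatures\<close>

lemma concat_map_singleton_filter:
  "concat (map (\<lambda>k. if P k then [f k] else []) xs) = map f (filter P xs)"
  by (induction xs) auto

text \<open>A block in the tail of a signature: a lone plus at p, or a plus at p immediately
  followed by a minus at q which it cancels.\<close>
fun plus_block :: "nat \<times> nat option \<Rightarrow> (nat \<times> bool) list" where
  "plus_block (p, None) = [(p, True)]"
| "plus_block (p, Some q) = [(p, True), (q, False)]"

abbreviation structured :: "nat list \<Rightarrow> (nat \<times> nat option) list \<Rightarrow> (nat \<times> bool) list" where
  "structured A bs \<equiv> map (\<lambda>p. (p, False)) A @ concat (map plus_block bs)"

text \<open>One cancellation round on a structured signature removes the first pair block;
  pair_count counts the pair blocks, i.e. the rounds that still change something.\<close>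
fun drop_first_pair :: "(nat \<times> nat option) list \<Rightarrow> (nat \<times> nat option) list" where
  "drop_first_pair [] = []"
| "drop_first_pair ((p, None) # bs) = (p, None) # drop_first_pair bs"
| "drop_first_pair ((p, Some q) # bs) = bs"

definition pair_count :: "(nat \<times> nat option) list \<Rightarrow> nat" where
  "pair_count bs = length (filter (\<lambda>x. snd x \<noteq> None) bs)"

lemma pair_count_drop_first_pair: "pair_count (drop_first_pair bs) = pair_count bs - 1"
  by (induction bs rule: drop_first_pair.induct) (auto simp: pair_count_def)

lemma drop_first_pair_id: "pair_count bs = 0 \<Longrightarrow> drop_first_pair bs = bs"
  by (induction bs rule: drop_first_pair.induct) (auto simp: pair_count_def)

lemma pair_count_le: "pair_count bs \<le> length (concat (map plus_block bs))"
proof (induction bs)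
  case (Cons b bs)
  then show ?case by (cases b; cases "snd b") (auto simp: pair_count_def)
qed (simp add: pair_count_def)

text \<open>Leading minuses can never be cancelled.\<close>
lemma cancel_step_minus_prefix:
  "cancel_step (map (\<lambda>p. (p, False)) A @ s) = map_option ((@) (map (\<lambda>p. (p, False)) A)) (cancel_step s)"
proof (induction A)
  case Nil
  show ?case by (cases "cancel_step s") auto
qed (auto simp: option.map_comp o_def)

lemma cancel_step_blocks:
  "cancel_step (concat (map plus_block bs)) =
     (if pair_count bs = 0 then None else Some (concat (map plus_block (drop_first_pair bs))))"
proof (induction bs rule: drop_first_pair.induct)
  case (2 p bs)
  show ?case
  proof (cases bs)
    case (Cons b bs')
    obtain q o' where b: "b = (q, o')" by (cases b)
    have "concat (map plus_block bs) = (q, True) # tl (concat (map plus_block bs))"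
      using Cons b by (cases o') auto
    then have "cancel_step (concat (map plus_block ((p, None) # bs))) =
        map_option ((#) (p, True)) (cancel_step (concat (map plus_block bs)))"
      by (metis plus_block.simps(1) cancel_step.simps(4) concat.simps(2) append_Cons append_Nil list.simps(9))
    then show ?thesis using 2 by (auto simp: pair_count_def)
  qed (simp add: pair_count_def)
qed (simp_all add: pair_count_def)

lemma cancel_once_structured:
  "cancel_once (structured A bs) = structured A (drop_first_pair bs)"
  unfolding cancel_once_def cancel_step_minus_prefix cancel_step_blocks
  by (auto simp: drop_first_pair_id)

lemma cancel_once_iter_structured:
  "(cancel_once ^^ n) (structured A bs) = structured A ((drop_first_pair ^^ n) bs)"
  by (induction n) (auto simp: cancel_once_structured)

lemma pair_count_iter: "pair_count ((drop_first_pair ^^ n) bs) = pair_count bs - n"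
  by (induction n) (auto simp: pair_count_drop_first_pair)

lemma no_minus_in_blocks: "pair_count bs = 0 \<Longrightarrow> [p. (p, s) \<leftarrow> concat (map plus_block bs), \<not> s] = []"
proof (induction bs)
  case (Cons b bs)
  then show ?case by (cases b; cases "snd b") (auto simp: pair_count_def)
qed simp

lemma minuses_of_minus_prefix: "[p. (p, s) \<leftarrow> map (\<lambda>p. (p, False)) A, \<not> s] = A"
  by (induction A) auto

text \<open>On a structured signature, all pairs cancel and e_i acts on the last unmatched minus.\<close>
lemma kashiwara_e_structured:
  assumes "signature i w = structured A bs"
  shows "kashiwara_e i w = (if A = [] then None else Some (w[last A := i]))"
proof -
  define bs' where "bs' = (drop_first_pair ^^ length (signature i w)) bs"
  have red: "reduced_signature i w = structured A bs'"
    unfolding reduced_signature_def assms cancel_once_iter_structured bs'_def ..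
  have "pair_count bs' = 0"
    unfolding bs'_def pair_count_iter assms using pair_count_le[of bs] by simp
  then have "[p. (p, s) \<leftarrow> reduced_signature i w, \<not> s] = A"
    unfolding red map_append concat_append minuses_of_minus_prefix
    using no_minus_in_blocks by simp
  then show ?thesis unfolding kashiwara_e_def by simp
qed

lemma signature_explicit:
  "signature i w = map (\<lambda>k. (k, w!k = i)) (filter (\<lambda>k. w!k = i \<or> w!k = Suc i) [0..<length w])"
  unfolding signature_def by (simp add: concat_map_singleton_filter)

lemma signature_positions:
  "distinct (map fst (signature i w))"
  "(k, s) \<in> set (signature i w) \<Longrightarrow> k < length w \<and> (s \<longleftrightarrow> w!k = i) \<and> (w!k = i \<or> w!k = Suc i)"
  unfolding signature_explicit by (auto simp: map_map o_def)

definition overwrite :: "nat list \<Rightarrow> nat set \<Rightarrow> nat \<Rightarrow> nat list" where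
  "overwrite w S v = map (\<lambda>k. if k \<in> S then v else w!k) [0..<length w]"

lemma overwrite_empty: "overwrite w {} v = w"
  unfolding overwrite_def by (simp add: map_nth)

lemma length_overwrite [simp]: "length (overwrite w S v) = length w"
  unfolding overwrite_def by simp

lemma nth_overwrite: "k < length w \<Longrightarrow> overwrite w S v ! k = (if k \<in> S then v else w!k)"
  unfolding overwrite_def by simp

lemma overwrite_insert: "p < length w \<Longrightarrow> (overwrite w S v)[p := v] = overwrite w (insert p S) v"
  by (rule nth_equalityI) (auto simp: nth_overwrite nth_list_update)

lemma signature_overwrite:
  assumes "\<forall>k\<in>S. k < length w \<and> w!k = Suc i"
  shows "signature i (overwrite w S i) = map (\<lambda>(k, s). (k, s \<or> k \<in> S)) (signature i w)"
proof -
  have "filter (\<lambda>k. overwrite w S i ! k = i \<or> overwrite w S i ! k = Suc i) [0..<length w]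
      = filter (\<lambda>k. w!k = i \<or> w!k = Suc i) [0..<length w]"
    by (rule filter_cong) (use assms in \<open>auto simp: nth_overwrite\<close>)
  then show ?thesis unfolding signature_explicit length_overwrite map_map
    by (intro map_cong) (use assms in \<open>auto simp: nth_overwrite\<close>)
qed

lemma structured_minus_positions:
  assumes sig: "signature i w = structured A bs"
  shows "distinct A" and "\<forall>x \<in> set (concat (map plus_block bs)). fst x \<notin> set A"
    and "\<forall>k\<in>set A. k < length w \<and> w!k = Suc i"
proof -
  have "distinct (map fst (structured A bs))"
    using signature_positions(1)[of i w] sig by simp
  then show "distinct A" and "\<forall>x \<in> set (concat (map plus_block bs)). fst x \<notin> set A"
    by (auto simp: map_map o_def)
  show "\<forall>k\<in>set A. k < length w \<and> w!k = Suc i"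
  proof
    fix k assume "k \<in> set A"
    then have "(k, False) \<in> set (signature i w)" using sig by auto
    from signature_positions(2)[OF this] show "k < length w \<and> w!k = Suc i" by auto
  qed
qed

lemma signature_after_lowering:
  assumes sig: "signature i w = structured A bs"
  shows "signature i (overwrite w (set (drop m A)) i)
           = structured (take m A) (map (\<lambda>p. (p, None)) (drop m A) @ bs)"
proof -
  define D where "D = drop m A"
  note A = structured_minus_positions[OF sig]
  have D: "set D \<subseteq> set A" "set (take m A) \<inter> set D = {}"
    using A(1) distinct_append[of "take m A" D] unfolding D_def by (auto dest: in_set_dropD)
  let ?raise = "\<lambda>(k, s). (k, s \<or> k \<in> set D)"
  have blocks: "map ?raise (concat (map plus_block bs)) = concat (map plus_block bs)"
    using A(2) D(1)
  proof (induction bs)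
    case (Cons b bs)
    then show ?case by (cases b; cases "snd b") auto
  qed simp
  have "map ?raise (map (\<lambda>p. (p, False)) (take m A @ D))
      = map (\<lambda>p. (p, False)) (take m A) @ map (\<lambda>p. (p, True)) D"
    using D(2) by auto
  then have minuses: "map ?raise (map (\<lambda>p. (p, False)) A)
      = map (\<lambda>p. (p, False)) (take m A) @ map (\<lambda>p. (p, True)) D"
    by (simp add: D_def)
  have "signature i (overwrite w (set D) i) = map ?raise (structured A bs)"
    using signature_overwrite[of "set D" w i] A(3) D(1) sig by auto
  also have "\<dots> = map (\<lambda>p. (p, False)) (take m A) @ map (\<lambda>p. (p, True)) D @ concat (map plus_block bs)"
    by (simp only: map_append minuses blocks append_assoc)
  also have "\<dots> = structured (take m A) (map (\<lambda>p. (p, None)) D @ bs)"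
    by (induction D) auto
  finally show ?thesis unfolding D_def .
qed

lemma kashiwara_e_iter_structured:
  assumes sig: "signature i w = structured A bs" and "n \<le> length A"
  shows "kashiwara_e_iter i n w = Some (overwrite w (set (drop (length A - n) A)) i)"
  using assms(2)
proof (induction n)
  case 0
  then show ?case by (simp add: overwrite_empty)
next
  case (Suc n)
  define m where "m = length A - Suc n"
  have m: "m < length A" "length A - n = Suc m" using Suc.prems unfolding m_def by auto
  have last: "last (take (Suc m) A) = A ! m"
    using m by (simp add: last_conv_nth take_Suc_conv_app_nth)
  have drop: "drop m A = A ! m # drop (Suc m) A"
    using m by (simp add: Cons_nth_drop_Suc)
  have A: "A \<noteq> []" "A ! m < length w"
    using structured_minus_positions(3)[OF sig] m by auto
  have "kashiwara_e_iter i (Suc n) w = kashiwara_e i (overwrite w (set (drop (Suc m) A)) i)"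
    using Suc m by simp
  also have "\<dots> = Some ((overwrite w (set (drop (Suc m) A)) i)[A ! m := i])"
    using kashiwara_e_structured[OF signature_after_lowering[OF sig, of "Suc m"]] A(1) last by simp
  also have "\<dots> = Some (overwrite w (set (drop m A)) i)"
    using overwrite_insert[OF A(2)] drop by simp
  finally show ?case unfolding m_def .
qed

lemma kashiwara_e_max_structured:
  assumes sig: "signature i w = structured A bs"
  shows "(GREATEST n. kashiwara_e_iter i n w \<noteq> None) = length A"
    and "the (kashiwara_e_iter i (length A) w) = overwrite w (set A) i"
proof -
  have all: "kashiwara_e_iter i (length A) w = Some (overwrite w (set A) i)"
    using kashiwara_e_iter_structured[OF sig, of "length A"] by simp
  have "kashiwara_e i (overwrite w (set A) i) = None"
    using kashiwara_e_structured[OF signature_after_lowering[OF sig, of 0]] by simp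
  then have "kashiwara_e_iter i (Suc (length A + d)) w = None" for d
    using all by (induction d) auto
  then have "kashiwara_e_iter i n w \<noteq> None \<Longrightarrow> n \<le> length A" for n
    by (metis less_iff_Suc_add not_le)
  then show "(GREATEST n. kashiwara_e_iter i n w \<noteq> None) = length A"
    using all by (intro Greatest_equality) auto
  show "the (kashiwara_e_iter i (length A) w) = overwrite w (set A) i"
    using all by simp
qed

definition signature_from :: "nat \<Rightarrow> nat list \<Rightarrow> nat \<Rightarrow> (nat \<times> bool) list" where
  "signature_from i w m = map (\<lambda>k. (k, w!k = i)) (filter (\<lambda>k. w!k = i \<or> w!k = Suc i) [m..<length w])"

lemma signature_from_step:
  "m < length w \<Longrightarrow> signature_from i w m =
     (if w!m = i \<or> w!m = Suc i then [(m, w!m = i)] else []) @ signature_from i w (Suc m)"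
  unfolding signature_from_def by (simp add: upt_conv_Cons)

definition minus_preceded :: "nat \<Rightarrow> nat list \<Rightarrow> nat \<Rightarrow> bool" where
  "minus_preceded i w m \<longleftrightarrow> (\<forall>q. m \<le> q \<and> q < length w \<and> w!q = Suc i \<longrightarrow> m < q \<and> w!(q-1) = i)"

lemma minus_preceded_start: "minus_preceded i w m \<Longrightarrow> m < length w \<Longrightarrow> w!m \<noteq> Suc i"
  unfolding minus_preceded_def by blast

lemma minus_preceded_later:
  "minus_preceded i w m \<Longrightarrow> m \<le> m' \<Longrightarrow> (m' < length w \<longrightarrow> w!m' \<noteq> Suc i) \<Longrightarrow> minus_preceded i w m'"
  unfolding minus_preceded_def by (metis le_trans nat_less_le)

lemma minus_preceded_skip:
  assumes prec: "minus_preceded i w m" and "\<not> (w!m = i \<and> Suc m < length w \<and> w!Suc m = Suc i)"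
  shows "minus_preceded i w (Suc m)"
proof (rule minus_preceded_later[OF prec])
  show "Suc m < length w \<longrightarrow> w!Suc m \<noteq> Suc i"
    using prec[unfolded minus_preceded_def, rule_format, of "Suc m"] assms(2) by auto
qed simp

lemma minus_preceded_skip_pair:
  assumes prec: "minus_preceded i w m" and "w!Suc m = Suc i"
  shows "minus_preceded i w (Suc (Suc m))"
proof (rule minus_preceded_later[OF prec])
  show "Suc (Suc m) < length w \<longrightarrow> w!Suc (Suc m) \<noteq> Suc i"
    using prec[unfolded minus_preceded_def, rule_format, of "Suc (Suc m)"] assms(2) by auto
qed simp

text \<open>In such a suffix every minus is cancelled by the plus right before it.\<close>
lemma blocks_if_minus_preceded:
  "minus_preceded i w m \<Longrightarrow> \<exists>bs. signature_from i w m = concat (map plus_block bs)"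
proof (induction "length w - m" arbitrary: m rule: less_induct)
  case less
  note prec = less.prems and IH = less.hyps
  show ?case
  proof (cases "m < length w")
    case False
    then show ?thesis by (intro exI[of _ "[]"]) (simp add: signature_from_def)
  next
    case m: True
    consider (pair) "w!m = i" "Suc m < length w" "w!Suc m = Suc i"
      | (lone) "w!m = i" "\<not> (Suc m < length w \<and> w!Suc m = Suc i)"
      | (other) "w!m \<noteq> i" by blast
    then show ?thesis
    proof cases
      case pair
      obtain bs where "signature_from i w (Suc (Suc m)) = concat (map plus_block bs)"
        using IH[of "Suc (Suc m)"] minus_preceded_skip_pair[OF prec pair(3)] m by fastforce
      moreover have "signature_from i w m = (m, True) # (Suc m, False) # signature_from i w (Suc (Suc m))"
        using pair m by (simp add: signature_from_step[of m] signature_from_step[of "Suc m"])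
      ultimately show ?thesis by (intro exI[of _ "(m, Some (Suc m)) # bs"]) simp
    next
      case lone
      obtain bs where "signature_from i w (Suc m) = concat (map plus_block bs)"
        using IH[of "Suc m"] minus_preceded_skip[OF prec] lone m by fastforce
      moreover have "signature_from i w m = (m, True) # signature_from i w (Suc m)"
        using lone m by (simp add: signature_from_step)
      ultimately show ?thesis by (intro exI[of _ "(m, None) # bs"]) simp
    next
      case other
      have "minus_preceded i w (Suc m)"
        using minus_preceded_skip[OF prec] other by blast
      moreover have "signature_from i w m = signature_from i w (Suc m)"
        using other minus_preceded_start[OF prec m] m by (simp add: signature_from_step)
      ultimately show ?thesis using IH m by fastforce
    qed
  qed
qed

lemma signature_structured:
  assumes "P \<le> length w" and "\<forall>k<P. w!k \<noteq> i" and "minus_preceded i w P"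
  shows "\<exists>bs. signature i w = structured (filter (\<lambda>k. w!k = Suc i) [0..<P]) bs"
proof -
  have split: "[0..<length w] = [0..<P] @ [P..<length w]"
    using upt_add_eq_append[of 0 P "length w - P"] assms(1) by simp
  obtain bs where bs: "signature_from i w P = concat (map plus_block bs)"
    using blocks_if_minus_preceded[OF assms(3)] by blast
  have "filter (\<lambda>k. w!k = i \<or> w!k = Suc i) [0..<P] = filter (\<lambda>k. w!k = Suc i) [0..<P]"
    by (rule filter_cong) (use assms(2) in auto)
  moreover have "map (\<lambda>k. (k, w!k = i)) (filter (\<lambda>k. w!k = Suc i) [0..<P])
      = map (\<lambda>p. (p, False)) (filter (\<lambda>k. w!k = Suc i) [0..<P])"
    by (rule map_cong) auto
  ultimately have "signature i w = structured (filter (\<lambda>k. w!k = Suc i) [0..<P]) bs"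
    using bs unfolding signature_explicit signature_from_def split by simp
  then show ?thesis ..
qed

fun bzl_final :: "nat list \<Rightarrow> nat list \<Rightarrow> nat list" where
  "bzl_final [] w = w"
| "bzl_final (i # is) w = bzl_final is (the (kashiwara_e_iter i (GREATEST n. kashiwara_e_iter i n w \<noteq> None) w))"

lemma bzl_path_append: "bzl_path (xs @ ys) w = bzl_path xs w @ bzl_path ys (bzl_final xs w)"
  by (induction xs arbitrary: w) (auto simp: Let_def)

lemma bzl_final_append: "bzl_final (xs @ ys) w = bzl_final ys (bzl_final xs w)"
  by (induction xs arbitrary: w) auto

text \<open>Triangular indexing: in a concatenation of blocks of lengths 1, 2, ..., the j-th
  entry of block i sits at position i(i-1)/2 + j - 1.\<close>
lemma length_concat_triangular:
  assumes "\<forall>k. length (f k) = k"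
  shows "2 * length (concat (map f [1..<i])) = i * (i - 1)"
proof (induction i)
  case (Suc i)
  then show ?case using assms by (cases i) (auto simp: algebra_simps)
qed simp

lemma nth_concat_triangular:
  assumes "\<forall>k. length (f k) = k" and "1 \<le> j" "j \<le> i" "i \<le> r"
  shows "concat (map f [1..<Suc r]) ! (i * (i - 1) div 2 + j - 1) = f i ! (j - 1)"
proof -
  have "[1..<Suc r] = [1..<i] @ [i..<Suc r]"
    using assms upt_add_eq_append[of 1 i "Suc r - i"] by simp
  also have "[i..<Suc r] = i # [Suc i..<Suc r]"
    using assms by (simp add: upt_conv_Cons)
  finally have blocks: "[1..<Suc r] = [1..<i] @ i # [Suc i..<Suc r]" .
  have "i * (i - 1) div 2 + j - 1 = length (concat (map f [1..<i])) + (j - 1)"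
    using length_concat_triangular[OF assms(1), of i] assms by simp
  moreover have "j - 1 < length (f i)"
    using assms by simp
  ultimately show ?thesis unfolding blocks by (simp add: nth_append)
qed

lemma filter_upt_downward_closed:
  "(\<forall>k k'. k \<le> k' \<longrightarrow> k' < n \<longrightarrow> Q k' \<longrightarrow> Q k) \<Longrightarrow> filter Q [0..<n] = [0..<length (filter Q [0..<n])]"
proof (induction n)
  case (Suc n)
  show ?case
  proof (cases "Q n")
    case True
    then have "filter Q [0..<n] = [0..<n]"
      using Suc.prems by (intro filter_True) (metis atLeastLessThan_iff set_upt less_Suc_eq less_imp_le)
    then show ?thesis using True by simp
  qed (use Suc in simp)
qed simp

lemma column_predecessor:
  "xs = concat (map (\<lambda>c. map (\<lambda>k. (k, c)) [0..<g c]) cs) \<Longrightarrow> j < length xs \<Longrightarrow> xs!j = (Suc k, c)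
   \<Longrightarrow> 1 \<le> j \<and> xs!(j - 1) = (k, c)"
proof (induction cs arbitrary: xs j)
  case (Cons c0 cs)
  define rest where "rest = concat (map (\<lambda>c. map (\<lambda>k. (k, c)) [0..<g c]) cs)"
  have xs: "xs = map (\<lambda>k. (k, c0)) [0..<g c0] @ rest" using Cons.prems rest_def by simp
  show ?case
  proof (cases "j < g c0")
    case True
    then have "j = Suc k" "c = c0" using xs Cons.prems by (auto simp: nth_append)
    then show ?thesis using xs True by (simp add: nth_append)
  next
    case False
    then have "rest!(j - g c0) = (Suc k, c)" "j - g c0 < length rest"
      using xs Cons.prems by (auto simp: nth_append)
    then have "1 \<le> j - g c0 \<and> rest!(j - g c0 - 1) = (k, c)" using Cons.IH rest_def by blast
    then show ?thesis using xs False by (auto simp: nth_append)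
  qed
qed simp

section \<open>Semistandard tableaux of shape \<lambda> + \<rho>\<close>

locale lambda_rho_tableau =
  fixes r :: nat and lam :: "nat \<Rightarrow> nat" and T :: "nat list list"
  assumes ssyt: "ssyt_lambda_rho r lam T"
begin

abbreviation len :: "nat \<Rightarrow> nat" where "len k \<equiv> length (T ! k)"

lemma number_of_rows: "length T = r"
  using ssyt unfolding ssyt_lambda_rho_def by simp

lemma row_sorted: "k < r \<Longrightarrow> sorted (T!k)"
  using ssyt unfolding ssyt_lambda_rho_def by simp

lemma row_length_antimono: "k \<le> k' \<Longrightarrow> k' < r \<Longrightarrow> len k' \<le> len k"
proof -
  assume "k \<le> k'" "k' < r"
  then have "len k' = (\<Sum>i\<in>{Suc k'..r}. lam i + 1)" "len k = (\<Sum>i\<in>{Suc k..r}. lam i + 1)"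
    using ssyt unfolding ssyt_lambda_rho_def by auto
  with \<open>k \<le> k'\<close> show ?thesis by (simp add: sum_mono2)
qed

lemma column_strict: "k < k' \<Longrightarrow> k' < r \<Longrightarrow> c < len k' \<Longrightarrow> T!k!c < T!k'!c"
proof (induction k' rule: less_induct)
  case (less k')
  then obtain m where m: "k' = Suc m" by (cases k') auto
  have "c < len m" using row_length_antimono[of m k'] less.prems m by simp
  then have "k = m \<or> T!k!c < T!m!c" using less.IH[of m] less.prems m by fastforce
  moreover have "T!m!c < T!k'!c"
    using ssyt less.prems m unfolding ssyt_lambda_rho_def by blast
  ultimately show ?case by auto
qed

lemma column_mono: "k \<le> k' \<Longrightarrow> k' < r \<Longrightarrow> c < len k' \<Longrightarrow> T!k!c \<le> T!k'!c"
  using column_strict[of k k' c] by (cases "k = k'") auto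

lemma entry_ge_row: "k < r \<Longrightarrow> c < len k \<Longrightarrow> Suc k \<le> T!k!c"
proof (induction k)
  case 0
  then have "T!0!c \<in> set (T!0)" by simp
  then show ?case using ssyt 0 unfolding ssyt_lambda_rho_def by fastforce
next
  case (Suc k)
  have "c < len k" using row_length_antimono[of k "Suc k"] Suc.prems by simp
  then show ?case using Suc column_strict[of k "Suc k" c] by fastforce
qed

definition column_cells :: "nat \<Rightarrow> (nat \<times> nat) list" where
  "column_cells c = [(k, c). k \<leftarrow> [0..<r], c < len k]"

definition cells :: "(nat \<times> nat) list" where
  "cells = concat (map column_cells (rev [0..<len 0]))"

definition column_height :: "nat \<Rightarrow> nat" where
  "column_height c = length (filter (\<lambda>k. c < len k) [0..<r])"

lemma column_cells_eq: "column_cells c = map (\<lambda>k. (k, c)) [0..<column_height c]"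
proof -
  have "column_cells c = map (\<lambda>k. (k, c)) (filter (\<lambda>k. c < len k) [0..<r])"
    unfolding column_cells_def by (simp add: concat_map_singleton_filter)
  moreover have "filter (\<lambda>k. c < len k) [0..<r] = [0..<column_height c]"
    unfolding column_height_def
    by (rule filter_upt_downward_closed) (meson row_length_antimono less_le_trans)
  ultimately show ?thesis by simp
qed

lemma set_column_cells: "set (concat (map column_cells cs)) = {(k, c). c \<in> set cs \<and> k < r \<and> c < len k}"
  unfolding column_cells_def by auto

lemma distinct_column_cells: "distinct cs \<Longrightarrow> distinct (concat (map column_cells cs))"
proof (induction cs)
  case (Cons c cs)
  have "distinct (column_cells c)" unfolding column_cells_eq by (simp add: distinct_map inj_on_def)
  moreover have "set (column_cells c) \<inter> set (concat (map column_cells cs)) = {}"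
    using Cons.prems unfolding set_column_cells[of cs] by (auto simp: column_cells_def)
  ultimately show ?case using Cons by simp
qed simp

lemma distinct_cells: "distinct cells"
  unfolding cells_def by (rule distinct_column_cells) simp

lemma set_cells: "set cells = {(k, c). k < r \<and> c < len k}"
proof -
  have "c < len k \<Longrightarrow> k < r \<Longrightarrow> c < len 0" for k c using row_length_antimono[of 0 k] by simp
  then show ?thesis unfolding cells_def set_column_cells by auto
qed

lemma cell_at: "p < length cells \<Longrightarrow> cells!p = (k, c) \<Longrightarrow> k < r \<and> c < len k"
  using set_cells by (metis (mono_tags, lifting) case_prodD mem_Collect_eq nth_mem)

lemma reading_word_cells: "reading_word T = map (\<lambda>(k, c). T!k!c) cells"
proof -
  have "[T!k!c. k \<leftarrow> [0..<length T], c < length (T!k)] = map (\<lambda>(k, c). T!k!c) (column_cells c)" for c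
    unfolding column_cells_def number_of_rows by (induction r) auto
  then show ?thesis unfolding reading_word_def cells_def map_concat map_map o_def by simp
qed

definition stage_entry :: "nat \<Rightarrow> nat \<Rightarrow> nat \<times> nat \<Rightarrow> nat" where
  "stage_entry L u x = (case x of (k, c) \<Rightarrow>
     if T!k!c < L then Suc k else if T!k!c = L then max (Suc k) u else T!k!c)"

definition stage_word :: "nat \<Rightarrow> nat \<Rightarrow> nat list" where
  "stage_word L u = map (stage_entry L u) cells"

lemma stage_word_initial: "stage_word 2 2 = reading_word T"
  unfolding stage_word_def reading_word_cells
proof (rule map_cong[OF refl])
  fix x assume "x \<in> set cells"
  then obtain k c where x: "x = (k, c)" "k < r" "c < len k" unfolding set_cells by auto
  then have "Suc k \<le> T!k!c" using entry_ge_row by simp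
  then show "stage_entry 2 2 x = (case x of (k, c) \<Rightarrow> T!k!c)"
    unfolding stage_entry_def x by auto
qed

lemma stage_word_next_bound: "stage_word L 1 = stage_word (Suc L) (Suc L)"
  unfolding stage_word_def
proof (rule map_cong[OF refl])
  fix x assume "x \<in> set cells"
  then obtain k c where x: "x = (k, c)" "k < r" "c < len k" unfolding set_cells by auto
  then have "Suc k \<le> T!k!c" using entry_ge_row by simp
  then show "stage_entry L 1 x = stage_entry (Suc L) (Suc L) x"
    unfolding stage_entry_def x by auto
qed

subsection \<open>One step: applying e_{\<rho>+1} to W(\<beta>+1, \<rho>+2)\<close>

text \<open>Row \<rho> (counted from 0) splits at column cut into entries
  \<le> \<beta> on the left and entries > \<beta> on the right.  In W(\<beta>+1, \<rho>+2) the pluses of colour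
  \<rho>+1 are the left part of row \<rho>; the minuses below them are cancelled, and the remaining
  minuses are exactly the (\<beta>+1)-boxes in rows 0..\<rho>, all lying to the right.\<close>
context
  fixes rho beta :: nat
  assumes rho_beta: "Suc rho \<le> beta" "beta \<le> r"
begin

lemma rho_less: "rho < r"
  using rho_beta by simp

definition cut :: nat where
  "cut = length (takeWhile (\<lambda>x. x \<le> beta) (T!rho))"

lemma cut_char: "c < len rho \<Longrightarrow> T!rho!c \<le> beta \<longleftrightarrow> c < cut"
proof
  assume c: "c < len rho" and le: "T!rho!c \<le> beta"
  show "c < cut"
  proof (rule ccontr)
    assume "\<not> c < cut"
    then have "cut < len rho" using c by simp
    then have "\<not> T!rho!cut \<le> beta" using nth_length_takeWhile cut_def by metis
    moreover have "T!rho!cut \<le> T!rho!c"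
      using sorted_nth_mono[OF row_sorted[OF rho_less]] \<open>\<not> c < cut\<close> c by simp
    ultimately show False using le by simp
  qed
next
  assume "c < cut"
  then have "T!rho!c \<in> set (takeWhile (\<lambda>x. x \<le> beta) (T!rho))"
    unfolding cut_def by (metis nth_mem takeWhile_nth)
  then show "T!rho!c \<le> beta" by (metis set_takeWhileD)
qed

lemma cut_le: "cut \<le> len rho" "cut \<le> len 0"
  using cut_def length_takeWhile_le row_length_antimono[of 0 rho] rho_less
  by (metis le_trans, metis le0 le_trans length_takeWhile_le)

text \<open>The cells right of the cut come first in reading order.\<close>
definition right_cells :: "(nat \<times> nat) list" where
  "right_cells = concat (map column_cells (rev [cut..<len 0]))"

definition left_cells :: "(nat \<times> nat) list" where
  "left_cells = concat (map column_cells (rev [0..<cut]))"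

lemma cells_split: "cells = right_cells @ left_cells"
proof -
  have "[0..<len 0] = [0..<cut] @ [cut..<len 0]"
    using upt_add_eq_append[of 0 cut "len 0 - cut"] cut_le by simp
  then show ?thesis unfolding cells_def right_cells_def left_cells_def by simp
qed

lemma right_cell: "p < length right_cells \<Longrightarrow> cells!p = (k, c) \<Longrightarrow> cut \<le> c"
proof -
  assume "p < length right_cells" "cells!p = (k, c)"
  then have "(k, c) \<in> set right_cells" unfolding cells_split by (metis nth_append nth_mem)
  then show ?thesis unfolding right_cells_def set_column_cells by simp
qed

lemma left_cell:
  assumes "length right_cells \<le> p" "p < length cells"
  shows "cells!p = left_cells!(p - length right_cells)" and "p - length right_cells < length left_cells"
    and "snd (cells!p) < cut"
proof -
  show 1: "cells!p = left_cells!(p - length right_cells)" and 2: "p - length right_cells < length left_cells"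
    using assms unfolding cells_split by (auto simp: nth_append)
  have "left_cells!(p - length right_cells) \<in> set left_cells" using 2 by simp
  then show "snd (cells!p) < cut" unfolding 1 left_cells_def set_column_cells by auto
qed

definition boxes :: "(nat \<times> nat) set" where
  "boxes = {(k, c). k < Suc rho \<and> c < len k \<and> T!k!c = Suc beta}"

lemma card_boxes: "card boxes = tableau_data T (Suc rho) beta"
proof -
  have "boxes = Sigma {..<Suc rho} (\<lambda>k. {c. c < len k \<and> T!k!c = Suc beta})"
    unfolding boxes_def by auto
  then have "card boxes = (\<Sum>k<Suc rho. card {c. c < len k \<and> T!k!c = Suc beta})"
    by (simp add: card_SigmaI)
  also have "\<dots> = (\<Sum>k<Suc rho. count_list (T!k) (Suc beta))"
    unfolding count_list_eq_length_filter length_filter_conv_card by (simp add: eq_commute)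
  finally show ?thesis unfolding tableau_data_def .
qed

abbreviation entry_before :: "nat \<times> nat \<Rightarrow> nat" where
  "entry_before \<equiv> stage_entry (Suc beta) (Suc (Suc rho))"

abbreviation word_before :: "nat list" where
  "word_before \<equiv> stage_word (Suc beta) (Suc (Suc rho))"

lemma nth_word_before: "p < length cells \<Longrightarrow> word_before!p = entry_before (cells!p)"
  unfolding stage_word_def by simp

lemma plus_entry:
  "k < r \<Longrightarrow> c < len k \<Longrightarrow> entry_before (k, c) = Suc rho \<longleftrightarrow> k = rho \<and> T!k!c \<le> beta"
  using rho_beta unfolding stage_entry_def by auto

lemma left_minus_entry:
  assumes "k < r" "c < len k" "c < cut" and minus: "entry_before (k, c) = Suc (Suc rho)"
  shows "k = Suc rho"
proof -
  have crho: "c < len rho" using assms(3) cut_le by simp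
  have Tr: "T!rho!c \<le> beta" using cut_char[OF crho] assms(3) by simp
  consider "T!k!c < Suc beta" | "T!k!c = Suc beta" | "T!k!c > Suc beta" by linarith
  then show ?thesis
  proof cases
    case 2
    then have "k \<le> Suc rho" using minus by (simp add: stage_entry_def)
    moreover have "\<not> k \<le> rho"
      using column_mono[of k rho c] crho rho_less 2 Tr by auto
    ultimately show ?thesis by simp
  qed (use minus rho_beta in \<open>simp_all add: stage_entry_def\<close>)
qed

lemma right_minus_entry:
  assumes "k < r" "c < len k"
  shows "cut \<le> c \<and> entry_before (k, c) = Suc (Suc rho) \<longleftrightarrow> (k, c) \<in> boxes"
proof
  assume a: "cut \<le> c \<and> entry_before (k, c) = Suc (Suc rho)"
  have below: "T!rho!c < T!k!c" "beta < T!rho!c" if "k = Suc rho"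
    using column_strict[of rho k c] cut_char[of c] row_length_antimono[of rho k] that assms a by auto
  consider "T!k!c < Suc beta" | "T!k!c = Suc beta" | "T!k!c > Suc beta" by linarith
  then show "(k, c) \<in> boxes"
  proof cases
    case 1
    then show ?thesis using a below by (simp add: stage_entry_def)
  next
    case 2
    then have "k \<le> Suc rho" using a by (simp add: stage_entry_def max_def split: if_splits)
    moreover have "k \<noteq> Suc rho" using below 2 by fastforce
    ultimately show ?thesis using 2 assms by (simp add: boxes_def)
  qed (use a rho_beta in \<open>simp add: stage_entry_def\<close>)
next
  assume "(k, c) \<in> boxes"
  then have k: "k < Suc rho" and x: "T!k!c = Suc beta" by (auto simp: boxes_def)
  have "cut \<le> c"
  proof (rule ccontr)
    assume "\<not> cut \<le> c"
    then have "c < len rho" "T!rho!c \<le> beta" using cut_le cut_char[of c] by auto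
    moreover have "T!k!c \<le> T!rho!c" using column_mono[of k rho c] k rho_less \<open>c < len rho\<close> by simp
    ultimately show False using x by simp
  qed
  then show "cut \<le> c \<and> entry_before (k, c) = Suc (Suc rho)" using k x by (simp add: stage_entry_def)
qed

lemma entry_after:
  "c < len k \<Longrightarrow> stage_entry (Suc beta) (Suc rho) (k, c) = (if (k, c) \<in> boxes then Suc rho else entry_before (k, c))"
  unfolding stage_entry_def boxes_def by auto

lemma no_plus_on_right: "p < length right_cells \<Longrightarrow> word_before!p \<noteq> Suc rho"
proof
  assume p: "p < length right_cells" and is_plus: "word_before!p = Suc rho"
  obtain k c where kc: "cells!p = (k, c)" by (cases "cells!p")
  have pl: "p < length cells" using p cells_split by simp
  have v: "k < r" "c < len k" using cell_at[OF pl kc] by auto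
  have "entry_before (k, c) = Suc rho"
    using is_plus nth_word_before[OF pl] kc by simp
  then have "k = rho" "T!k!c \<le> beta" using plus_entry[OF v] by auto
  then have "c < cut" using cut_char v by blast
  then show False using right_cell[OF p kc] by simp
qed

text \<open>Left of the cut every minus sits right below a plus, which precedes it in reading order.\<close>
lemma minus_preceded_on_left: "minus_preceded (Suc rho) word_before (length right_cells)"
  unfolding minus_preceded_def
proof (intro allI impI)
  fix q assume q: "length right_cells \<le> q \<and> q < length word_before \<and> word_before!q = Suc (Suc rho)"
  then have ql: "q < length cells" by (simp add: stage_word_def)
  note left = left_cell[OF conjunct1[OF q] ql]
  obtain k c where kc: "cells!q = (k, c)" by (cases "cells!q")
  have c: "c < cut" using left(3) kc by simp
  have v: "k < r" "c < len k" using cell_at[OF ql kc] by auto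
  have "k = Suc rho"
    using left_minus_entry[OF v c] q nth_word_before[OF ql] kc by simp
  then have "left_cells!(q - length right_cells) = (Suc rho, c)"
    using left(1) kc by simp
  moreover have left_eq:
    "left_cells = concat (map (\<lambda>c. map (\<lambda>k. (k, c)) [0..<column_height c]) (rev [0..<cut]))"
    unfolding left_cells_def column_cells_eq by simp
  ultimately have "1 \<le> q - length right_cells \<and> left_cells!(q - length right_cells - 1) = (rho, c)"
    using column_predecessor[OF left_eq left(2)] by blast
  then have q1: "length right_cells < q" "cells!(q - 1) = (rho, c)"
    using left_cell(1)[of "q - 1"] ql by auto
  have "c < len rho" "T!rho!c \<le> beta" using c cut_le cut_char[of c] by auto
  then have "word_before!(q - 1) = Suc rho"
    using plus_entry[OF rho_less] nth_word_before[of "q - 1"] ql q1 by simp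
  then show "length right_cells < q \<and> word_before!(q - 1) = Suc rho" using q1 by simp
qed

definition unmatched :: "nat list" where
  "unmatched = filter (\<lambda>p. word_before!p = Suc (Suc rho)) [0..<length right_cells]"

lemma signature_word_before: "\<exists>bs. signature (Suc rho) word_before = structured unmatched bs"
  unfolding unmatched_def
  by (rule signature_structured) (use no_plus_on_right minus_preceded_on_left cells_split in \<open>auto simp: stage_word_def\<close>)

lemma set_unmatched: "set unmatched = {p. p < length cells \<and> cells!p \<in> boxes}"
proof (intro set_eqI iffI)
  fix p assume "p \<in> set unmatched"
  then have p: "p < length right_cells" "word_before!p = Suc (Suc rho)" unfolding unmatched_def by auto
  then have pl: "p < length cells" using cells_split by simp
  obtain k c where kc: "cells!p = (k, c)" by (cases "cells!p")
  have v: "k < r" "c < len k" using cell_at[OF pl kc] by auto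
  have "(k, c) \<in> boxes"
    using right_minus_entry[OF v] right_cell[OF p(1) kc] p(2) nth_word_before[OF pl] kc by simp
  then show "p \<in> {p. p < length cells \<and> cells!p \<in> boxes}" using pl kc by simp
next
  fix p assume "p \<in> {p. p < length cells \<and> cells!p \<in> boxes}"
  then have pl: "p < length cells" and box: "cells!p \<in> boxes" by auto
  obtain k c where kc: "cells!p = (k, c)" by (cases "cells!p")
  have v: "k < r" "c < len k" using cell_at[OF pl kc] by auto
  have minus: "cut \<le> c \<and> entry_before (k, c) = Suc (Suc rho)"
    using right_minus_entry[OF v] box kc by simp
  have "p < length right_cells"
  proof (rule ccontr)
    assume "\<not> p < length right_cells"
    then have "c < cut" using left_cell(3)[of p] pl kc by simp
    then show False using minus by simp
  qed
  then show "p \<in> set unmatched" unfolding unmatched_def using minus nth_word_before[OF pl] kc by simp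
qed

lemma length_unmatched: "length unmatched = tableau_data T (Suc rho) beta"
proof -
  have "length unmatched = card (set unmatched)"
    by (rule distinct_card[symmetric]) (simp add: unmatched_def)
  also have "\<dots> = card ((!) cells ` set unmatched)"
    using distinct_cells set_unmatched by (intro card_image[symmetric] inj_on_nth) auto
  also have "(!) cells ` set unmatched = boxes"
  proof -
    have "boxes \<subseteq> set cells" unfolding set_cells boxes_def using rho_less by auto
    then have "\<forall>x\<in>boxes. \<exists>p<length cells. cells!p = x" by (auto simp: in_set_conv_nth)
    then show ?thesis unfolding set_unmatched by force
  qed
  finally show ?thesis using card_boxes by simp
qed

lemma lower_unmatched: "overwrite word_before (set unmatched) (Suc rho) = stage_word (Suc beta) (Suc rho)"
proof (rule nth_equalityI)
  fix p assume "p < length (overwrite word_before (set unmatched) (Suc rho))"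
  then have pl: "p < length cells" by (simp add: stage_word_def)
  obtain k c where kc: "cells!p = (k, c)" by (cases "cells!p")
  have "stage_word (Suc beta) (Suc rho) ! p = stage_entry (Suc beta) (Suc rho) (k, c)"
    unfolding stage_word_def using pl kc by simp
  also have "\<dots> = (if (k, c) \<in> boxes then Suc rho else entry_before (k, c))"
    using entry_after cell_at[OF pl kc] by blast
  also have "\<dots> = overwrite word_before (set unmatched) (Suc rho) ! p"
    using nth_overwrite[of p word_before] pl set_unmatched kc nth_word_before[OF pl]
    by (simp add: stage_word_def)
  finally show "overwrite word_before (set unmatched) (Suc rho) ! p = stage_word (Suc beta) (Suc rho) ! p" ..
qed (simp add: stage_word_def)

theorem stage_step:
  "(GREATEST n. kashiwara_e_iter (Suc rho) n word_before \<noteq> None) = tableau_data T (Suc rho) beta"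
  "the (kashiwara_e_iter (Suc rho) (tableau_data T (Suc rho) beta) word_before) = stage_word (Suc beta) (Suc rho)"
proof -
  obtain bs where "signature (Suc rho) word_before = structured unmatched bs"
    using signature_word_before by blast
  from kashiwara_e_max_structured[OF this] show
    "(GREATEST n. kashiwara_e_iter (Suc rho) n word_before \<noteq> None) = tableau_data T (Suc rho) beta"
    "the (kashiwara_e_iter (Suc rho) (tableau_data T (Suc rho) beta) word_before) = stage_word (Suc beta) (Suc rho)"
    unfolding length_unmatched lower_unmatched by simp_all
qed

end

lemma bzl_block:
  "t \<le> beta \<Longrightarrow> beta \<le> r \<Longrightarrow>
     bzl_path (rev [1..<Suc t]) (stage_word (Suc beta) (Suc t)) = map (\<lambda>s. tableau_data T s beta) (rev [1..<Suc t])
   \<and> bzl_final (rev [1..<Suc t]) (stage_word (Suc beta) (Suc t)) = stage_word (Suc beta) 1"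
proof (induction t)
  case (Suc t)
  have "rev [1..<Suc (Suc t)] = Suc t # rev [1..<Suc t]" by simp
  then show ?case using Suc stage_step[of t beta] by (simp add: Let_def)
qed simp

lemma bzl_blocks:
  "n \<le> r \<Longrightarrow>
     bzl_path (concat (map (\<lambda>k. rev [1..<Suc k]) [1..<Suc n])) (reading_word T)
       = concat (map (\<lambda>k. map (\<lambda>s. tableau_data T s k) (rev [1..<Suc k])) [1..<Suc n])
   \<and> bzl_final (concat (map (\<lambda>k. rev [1..<Suc k]) [1..<Suc n])) (reading_word T)
       = stage_word (Suc (Suc n)) (Suc (Suc n))"
proof (induction n)
  case 0
  then show ?case using stage_word_initial by (simp add: numeral_2_eq_2)
next
  case (Suc n)
  have "[1..<Suc (Suc n)] = [1..<Suc n] @ [Suc n]" by simp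
  then show ?case
    using Suc bzl_block[of "Suc n" "Suc n"] stage_word_next_bound[of "Suc (Suc n)"]
    by (simp add: bzl_path_append bzl_final_append)
qed

lemma bzl_path_long_word:
  "bzl_path (long_word r) (reading_word T)
     = concat (map (\<lambda>k. map (\<lambda>s. tableau_data T s k) (rev [1..<Suc k])) [1..<Suc r])"
  using bzl_blocks[of r] by (simp add: long_word_def)

end

theorem mainTheorem1:
  fixes r :: nat and lam :: "nat \<Rightarrow> nat" and T :: "nat list list" and i j :: nat
  assumes "r \<ge> 1"
    and "ssyt_lambda_rho r lam T"
    and "1 \<le> j" and "j \<le> i" and "i \<le> r"
  shows "bzl_path (long_word r) (reading_word T) ! (i * (i - 1) div 2 + j - 1)
           = tableau_data T (i - j + 1) i"
proof -
  interpret lambda_rho_tableau r lam T by (rule lambda_rho_tableau.intro) (rule assms(2))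
  have "bzl_path (long_word r) (reading_word T) ! (i * (i - 1) div 2 + j - 1)
      = map (\<lambda>s. tableau_data T s i) (rev [1..<Suc i]) ! (j - 1)"
    unfolding bzl_path_long_word by (rule nth_concat_triangular) (use assms in auto)
  also have "\<dots> = tableau_data T (rev [1..<Suc i] ! (j - 1)) i"
    using assms by (intro nth_map) simp
  also have "rev [1..<Suc i] ! (j - 1) = i - j + 1"
    using assms by (subst rev_nth) (auto simp del: upt_Suc)
  finally show ?thesis .
qed

end
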